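(* Let $\Gamma$ be a finite simplicial graph with vertex set $V=\{a_0,\ldots,a_{n-1}\}$, let $M$ be a positive integer and $\sigma:B(M)\to A(\Gamma)$ the map defined in the context. For all $u,v\in V$ and $x,y\in B(M)$: (1) $xy^{-1}\in Z(u)$ if and only if $\sigma(x)\sigma(y)^{-1}\in Z(u)$; (2) $xy^{-1}\in Z(v)Z(u)$ if and only if $\sigma(x)\sigma(y)^{-1}\in Z(v)Z(u)$.
   Context: $A(\Gamma)=\langle V\mid[a,b]=1\text{ for }\{a,b\}\in E(\Gamma)\rangle$; $\|w\|$ is the word length with respect to $V$, and $B(M)=\{w\in A(\Gamma):\|w\|\le M\}$. For $v\in V$, $Z(v)=\langle\mathrm{st}_\Gamma(v)\rangle$, the subgroup generated by $v$ and its neighbours, and $Z(v)Z(u)=\{gh:g\in Z(v),h\in Z(u)\}$. For a word $s_1^{e_1}\cdots s_\ell^{e_\ell}$ ($s_i\in V$, $e_i\in\{\pm1\}$, $\ell=\|w\|$) representing $w\in B(M)$, its right-counting vector $(f_1,\ldots,f_\ell)$ has $f_i=\min\|y\|$ over $y\in A(\Gamma)$ with $s_i^{e_i}\cdots s_\ell^{e_\ell}=x\,s_i^{e_i}\,y$ for some $x\in\langle\mathrm{lk}_\Gamma(s_i)\rangle$ ($\mathrm{lk}_\Gamma(s)$ = vertices adjacent to $s$). Set $N_i=\frac{3e_i-1}{2}\cdot4^{M-1-f_i}$ and $\sigma(w)=s_1^{N_1}\cdots s_\ell^{N_\ell}$; this is independent of the chosen word of length $\|w\|$ representing $w$. *)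

theory Defs
  imports Main
begin

text \<open>Right-angled Artin group A(Gamma) for a finite simplicial graph with vertex set the
finite type 'v and symmetric irreflexive edge relation E.  Group elements are represented by
words over letters (s, b) where b = True means s^1 and b = False means s^-1; two words
represent the same element iff they are related by req E.\<close>

type_synonym 'v letter = "'v \<times> bool"

inductive rstep :: "('v \<Rightarrow> 'v \<Rightarrow> bool) \<Rightarrow> 'v letter list \<Rightarrow> 'v letter list \<Rightarrow> bool"
  for E where
  cancel: "rstep E (xs @ [(a, b), (a, \<not> b)] @ ys) (xs @ ys)"
| comm: "E a c \<Longrightarrow> rstep E (xs @ [(a, b), (c, d)] @ ys) (xs @ [(c, d), (a, b)] @ ys)"

definition req :: "('v \<Rightarrow> 'v \<Rightarrow> bool) \<Rightarrow> 'v letter list \<Rightarrow> 'v letter list \<Rightarrow> bool" where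
  "req E = equivclp (rstep E)"

definition winv :: "'v letter list \<Rightarrow> 'v letter list" where
  "winv w = rev (map (\<lambda>(s, b). (s, \<not> b)) w)"

definition rnorm :: "('v \<Rightarrow> 'v \<Rightarrow> bool) \<Rightarrow> 'v letter list \<Rightarrow> nat" where
  "rnorm E w = (LEAST n. \<exists>w'. length w' = n \<and> req E w' w)"

definition inZ :: "('v \<Rightarrow> 'v \<Rightarrow> bool) \<Rightarrow> 'v \<Rightarrow> 'v letter list \<Rightarrow> bool" where
  "inZ E v w = (\<exists>g. (\<forall>l\<in>set g. fst l = v \<or> E v (fst l)) \<and> req E w g)"

definition inZZ :: "('v \<Rightarrow> 'v \<Rightarrow> bool) \<Rightarrow> 'v \<Rightarrow> 'v \<Rightarrow> 'v letter list \<Rightarrow> bool" where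
  "inZZ E v u w = (\<exists>g h. (\<forall>l\<in>set g. fst l = v \<or> E v (fst l)) \<and>
                         (\<forall>l\<in>set h. fst l = u \<or> E u (fst l)) \<and> req E w (g @ h))"

definition rpow :: "'v \<Rightarrow> int \<Rightarrow> 'v letter list" where
  "rpow s N = replicate (nat \<bar>N\<bar>) (s, N \<ge> 0)"

definition lexp :: "'v letter \<Rightarrow> int" where
  "lexp l = (if snd l then 1 else -1)"

text \<open>Right-counting vector entry f_i (0-based index i) of a word w.\<close>
definition rcount :: "('v \<Rightarrow> 'v \<Rightarrow> bool) \<Rightarrow> 'v letter list \<Rightarrow> nat \<Rightarrow> nat" where
  "rcount E w i = (LEAST n. \<exists>x y. (\<forall>l\<in>set x. E (fst (w ! i)) (fst l)) \<and>
                      req E (drop i w) (x @ [w ! i] @ y) \<and> rnorm E y = n)"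

definition sigma_word :: "('v \<Rightarrow> 'v \<Rightarrow> bool) \<Rightarrow> nat \<Rightarrow> 'v letter list \<Rightarrow> 'v letter list" where
  "sigma_word E M w = concat (map (\<lambda>i. rpow (fst (w ! i))
       (((3 * lexp (w ! i) - 1) div 2) * 4 ^ (M - 1 - rcount E w i))) [0..<length w])"

definition sigma :: "('v \<Rightarrow> 'v \<Rightarrow> bool) \<Rightarrow> nat \<Rightarrow> 'v letter list \<Rightarrow> 'v letter list" where
  "sigma E M w = sigma_word E M (SOME w'. req E w' w \<and> length w' = rnorm E w)"

end

theory Submission
  imports Defs
begin

text \<open>Choose geodesic words X and Y for x and y. Commuting cancelling letters to the end
  rewrites them, up to commutation, as X = X' Q and Y = Y' Q with X' Y'\<inverse> reduced. The
  right-counting exponent of a letter depends only on the element represented by the suffix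
  starting at that letter, so \<sigma> respects commutation and \<sigma>(X' Q) = A \<sigma>(Q), where A
  replaces every letter of X' by a positive power of itself; similarly for Y'. Hence
  \<sigma>(x)\<sigma>(y)\<inverse> = A B\<inverse> is such a power expansion of the reduced word X' Y'\<inverse>. Expansions
  of reduced words are reduced and keep the letters, and for reduced words membership in
  Z(u) and in Z(v)Z(u) only depends on which letters occur after pulling the maximal Z(v)-part
  to the front. Only the positivity of the exponents matters.

  Reduced words are handled through a normal form computed by left multiplication with free
  cancellation; it is unique up to commutation, and commutation equivalence is characterised
  by equal projections to all pairs of non-adjacent vertices.\<close>

definition letter_inv :: "'v letter \<Rightarrow> 'v letter" where
  "letter_inv l = (fst l, \<not> snd l)"

lemma letter_inv_letter_inv [simp]: "letter_inv (letter_inv l) = l"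
  by (simp add: letter_inv_def)

lemma fst_letter_inv [simp]: "fst (letter_inv l) = fst l"
  by (simp add: letter_inv_def)

lemma letter_inv_neq [simp]: "letter_inv l \<noteq> l" "l \<noteq> letter_inv l"
  by (auto simp: letter_inv_def prod_eq_iff)

lemma winv_Nil [simp]: "winv [] = []"
  by (simp add: winv_def)

lemma winv_Cons [simp]: "winv (l # w) = winv w @ [letter_inv l]"
  by (simp add: winv_def letter_inv_def split: prod.splits)

lemma winv_append [simp]: "winv (a @ b) = winv b @ winv a"
  by (simp add: winv_def)

lemma winv_winv [simp]: "winv (winv w) = w"
  by (induct w) auto

lemma set_winv: "set (winv w) = letter_inv ` set w"
  by (induct w) auto

lemma winv_replicate: "winv (replicate k l) = replicate k (letter_inv l)"
  by (induct k) (auto simp: replicate_append_same)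

lemma rstep_in_context: "rstep E a b \<Longrightarrow> rstep E (p @ a @ q) (p @ b @ q)"
proof (induct rule: rstep.induct)
  case (cancel xs a b ys)
  then show ?case using rstep.cancel[of E "p @ xs" a b "ys @ q"] by simp
next
  case (comm a c xs b d ys)
  then show ?case using rstep.comm[of E a c "p @ xs" b d "ys @ q"] by simp
qed

lemma req_refl [simp]: "req E w w"
  by (simp add: req_def)

lemma req_sym: "req E a b \<Longrightarrow> req E b a"
  by (simp add: req_def equivclp_sym)

lemma req_trans [trans]: "req E a b \<Longrightarrow> req E b c \<Longrightarrow> req E a c"
  unfolding req_def by (rule equivclp_trans)

lemma req_cong: "req E w w' \<Longrightarrow> req E w z \<longleftrightarrow> req E w' z"
  using req_sym req_trans by metis

lemma rstep_req: "rstep E a b \<Longrightarrow> req E a b"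
  by (simp add: req_def r_into_equivclp)

lemma req_in_context: "req E a b \<Longrightarrow> req E (p @ a @ q) (p @ b @ q)"
  unfolding req_def
proof (induct rule: equivclp_induct)
  case (step y z)
  from step(2) have "rstep E (p @ y @ q) (p @ z @ q) \<or> rstep E (p @ z @ q) (p @ y @ q)"
    by (auto intro: rstep_in_context)
  with step(3) show ?case by (rule equivclp_into_equivclp)
qed simp

lemma req_append: "req E a b \<Longrightarrow> req E c d \<Longrightarrow> req E (a @ c) (b @ d)"
  using req_in_context[of E a b "[]" c] req_in_context[of E c d b "[]"] by (auto intro: req_trans)

lemma req_Cons: "req E a b \<Longrightarrow> req E (l # a) (l # b)"
  using req_in_context[of E a b "[l]" "[]"] by simp

lemma req_cancel: "req E (l # letter_inv l # w) w"
  using rstep_req[OF rstep.cancel[of E "[]" "fst l" "snd l" w]] by (simp add: letter_inv_def)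

lemma req_cancel_inv: "req E (letter_inv l # l # w) w"
  using req_cancel[of E "letter_inv l"] by simp

lemma req_append_winv: "req E (w @ winv w) []"
proof (induct w)
  case (Cons l w)
  have "req E (l # w @ winv w @ [letter_inv l]) (l # [] @ [letter_inv l])"
    using req_in_context[OF Cons, of "[l]" "[letter_inv l]"] by simp
  also have "req E (l # [] @ [letter_inv l]) []"
    using req_cancel[of E l "[]"] by simp
  finally show ?case by simp
qed simp

lemma req_cancel_common_suffix: "req E ((a @ q) @ winv (b @ q)) (a @ winv b)"
  using req_in_context[OF req_append_winv, of E a q "winv b"] by simp

lemma inZ_req: "req E w w' \<Longrightarrow> inZ E u w \<longleftrightarrow> inZ E u w'"
  unfolding inZ_def using req_cong by blast

lemma inZZ_req: "req E w w' \<Longrightarrow> inZZ E v u w \<longleftrightarrow> inZZ E v u w'"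
  unfolding inZZ_def using req_cong by blast

locale simple_graph =
  fixes E :: "'v \<Rightarrow> 'v \<Rightarrow> bool"
  assumes sym: "E a b \<Longrightarrow> E b a"
    and irrefl: "\<not> E a a"
begin

lemma rstep_winv: "rstep E a b \<Longrightarrow> rstep E (winv a) (winv b)"
proof (induct rule: rstep.induct)
  case (cancel xs a b ys)
  then show ?case
    using rstep.cancel[of E "winv ys" a b "winv xs"] by (simp add: letter_inv_def)
next
  case (comm a c xs b d ys)
  then show ?case
    using rstep.comm[of E c a "winv ys" "\<not> d" "\<not> b" "winv xs"] sym by (simp add: letter_inv_def)
qed

lemma req_winv: "req E a b \<Longrightarrow> req E (winv a) (winv b)"
  unfolding req_def
proof (induct rule: equivclp_induct)
  case (step y z)
  from step(2) have "rstep E (winv y) (winv z) \<or> rstep E (winv z) (winv y)"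
    by (auto intro: rstep_winv)
  with step(3) show ?case by (rule equivclp_into_equivclp)
qed simp

end

section \<open>Commutation equivalence\<close>

inductive comm_swap :: "('v \<Rightarrow> 'v \<Rightarrow> bool) \<Rightarrow> 'v letter list \<Rightarrow> 'v letter list \<Rightarrow> bool"
  for E where
  "E (fst a) (fst c) \<Longrightarrow> comm_swap E (xs @ [a, c] @ ys) (xs @ [c, a] @ ys)"

abbreviation comm_equiv :: "('v \<Rightarrow> 'v \<Rightarrow> bool) \<Rightarrow> 'v letter list \<Rightarrow> 'v letter list \<Rightarrow> bool" where
  "comm_equiv E \<equiv> (comm_swap E)\<^sup>*\<^sup>*"

definition proj_pair :: "'v \<Rightarrow> 'v \<Rightarrow> 'v letter list \<Rightarrow> 'v letter list" where
  "proj_pair p q w = filter (\<lambda>l. fst l = p \<or> fst l = q) w"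

definition proj_equiv :: "('v \<Rightarrow> 'v \<Rightarrow> bool) \<Rightarrow> 'v letter list \<Rightarrow> 'v letter list \<Rightarrow> bool" where
  "proj_equiv E a b = (\<forall>p q. \<not> E p q \<longrightarrow> proj_pair p q a = proj_pair p q b)"

definition leading :: "('v \<Rightarrow> 'v \<Rightarrow> bool) \<Rightarrow> 'v letter \<Rightarrow> 'v letter list \<Rightarrow> bool" where
  "leading E l r = (\<exists>p s. r = p @ l # s \<and> (\<forall>y\<in>set p. E (fst l) (fst y)))"

lemma proj_pair_commute: "proj_pair p q r = proj_pair q p r"
  unfolding proj_pair_def by meson

lemma proj_pair_remove1:
  "proj_pair p q (remove1 x r) =
    (if fst x = p \<or> fst x = q then remove1 x (proj_pair p q r) else proj_pair p q r)"
  by (induct r) (auto simp: proj_pair_def)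

lemma proj_equiv_refl [simp]: "proj_equiv E a a"
  by (simp add: proj_equiv_def)

lemma proj_equiv_sym: "proj_equiv E a b \<Longrightarrow> proj_equiv E b a"
  by (simp add: proj_equiv_def)

lemma proj_equiv_trans: "proj_equiv E a b \<Longrightarrow> proj_equiv E b c \<Longrightarrow> proj_equiv E a c"
  by (simp add: proj_equiv_def)

lemma proj_equiv_append: "proj_equiv E a b \<Longrightarrow> proj_equiv E c d \<Longrightarrow> proj_equiv E (a @ c) (b @ d)"
  by (simp add: proj_equiv_def proj_pair_def)

lemma proj_equiv_Cons: "proj_equiv E a b \<Longrightarrow> proj_equiv E (l # a) (l # b)"
  using proj_equiv_append[of E "[l]" "[l]" a b] by simp

lemma comm_swap_in_context: "comm_swap E a b \<Longrightarrow> comm_swap E (p @ a @ q) (p @ b @ q)"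
proof (induct rule: comm_swap.induct)
  case (1 a c xs ys)
  then show ?case using comm_swap.intros[of E a c "p @ xs" "ys @ q"] by simp
qed

lemma comm_equiv_in_context: "comm_equiv E a b \<Longrightarrow> comm_equiv E (p @ a @ q) (p @ b @ q)"
proof (induct rule: rtranclp_induct)
  case (step y z)
  then show ?case by (meson rtranclp.rtrancl_into_rtrancl comm_swap_in_context)
qed simp

lemma comm_equiv_append: "comm_equiv E a b \<Longrightarrow> comm_equiv E c d \<Longrightarrow> comm_equiv E (a @ c) (b @ d)"
  using comm_equiv_in_context[of E a b "[]" c] comm_equiv_in_context[of E c d b "[]"] by auto

lemma comm_equiv_Cons: "comm_equiv E a b \<Longrightarrow> comm_equiv E (l # a) (l # b)"
  using comm_equiv_in_context[of E a b "[l]" "[]"] by simp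

lemma comm_swap_req: "comm_swap E a b \<Longrightarrow> req E a b"
proof (induct rule: comm_swap.induct)
  case (1 a c xs ys)
  then show ?case
    using rstep_req[OF rstep.comm[of E "fst a" "fst c" xs "snd a" "snd c" ys]] by simp
qed

lemma comm_equiv_req: "comm_equiv E a b \<Longrightarrow> req E a b"
proof (induct rule: rtranclp_induct)
  case (step y z)
  then show ?case using comm_swap_req req_trans by blast
qed simp

lemma comm_swap_length: "comm_swap E a b \<Longrightarrow> length a = length b"
  by (induct rule: comm_swap.induct) auto

lemma comm_swap_set: "comm_swap E a b \<Longrightarrow> set a = set b"
  by (induct rule: comm_swap.induct) auto

lemma comm_equiv_length: "comm_equiv E a b \<Longrightarrow> length a = length b"
  by (induct rule: rtranclp_induct) (auto dest: comm_swap_length)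

lemma comm_equiv_set: "comm_equiv E a b \<Longrightarrow> set a = set b"
  by (induct rule: rtranclp_induct) (auto dest: comm_swap_set)

lemma comm_equiv_move_right: "\<forall>y\<in>set p. E (fst l) (fst y) \<Longrightarrow> comm_equiv E (l # p) (p @ [l])"
proof (induct p)
  case (Cons y p)
  have "comm_swap E ([] @ [l, y] @ p) ([] @ [y, l] @ p)"
    using Cons.prems by (intro comm_swap.intros) auto
  then have "comm_equiv E (l # y # p) (y # l # p)" by simp
  also have "comm_equiv E (y # l # p) (y # p @ [l])"
    using Cons by (auto intro: comm_equiv_Cons)
  finally show ?case by simp
qed simp

lemma comm_equiv_move:
  assumes "\<forall>y\<in>set p. E (fst l) (fst y)"
  shows "comm_equiv E (a @ l # p @ b) (a @ p @ l # b)"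
  using comm_equiv_in_context[OF comm_equiv_move_right[where E=E, OF assms], of a b] by simp

lemma comm_equiv_replicate:
  "\<forall>y\<in>set p. E (fst l) (fst y) \<Longrightarrow> comm_equiv E (replicate k l @ p) (p @ replicate k l)"
proof (induct k)
  case (Suc k)
  have "comm_equiv E (l # replicate k l @ p) (l # p @ replicate k l)"
    using Suc by (auto intro: comm_equiv_Cons)
  also have "comm_equiv E (l # p @ replicate k l) (p @ l # replicate k l)"
    using comm_equiv_move[of p E l "[]"] Suc.prems by simp
  finally show ?case by simp
qed simp

lemma leading_Cons_self [simp]: "leading E m (m # r)"
  unfolding leading_def by (rule exI[of _ "[]"]) auto

lemma leading_append: "leading E l a \<Longrightarrow> leading E l (a @ b)"
  unfolding leading_def by (metis append.assoc append_Cons)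

lemma leading_Cons_adjacent: "leading E m r \<Longrightarrow> E (fst m) (fst l) \<Longrightarrow> leading E m (l # r)"
  unfolding leading_def by (metis append_Cons set_ConsD)

lemma leading_Cons_other:
  assumes "leading E m (l # r)" "m \<noteq> l"
  shows "leading E m r \<and> E (fst m) (fst l)"
proof -
  obtain p s where ps: "l # r = p @ m # s" "\<forall>y\<in>set p. E (fst m) (fst y)"
    using assms(1) unfolding leading_def by blast
  then obtain p' where "p = l # p'" using assms(2) by (cases p) auto
  then show ?thesis using ps unfolding leading_def by auto
qed

lemma leading_replicate:
  "leading E m (replicate k l @ x) \<Longrightarrow> m \<noteq> l \<Longrightarrow> leading E m x \<and> (0 < k \<longrightarrow> E (fst m) (fst l))"
  by (induct k) (auto dest: leading_Cons_other)

lemma leading_append_not_leading: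
  assumes "leading E m (X @ Z)" "\<not> leading E m X"
  shows "\<exists>us s. Z = us @ m # s \<and> (\<forall>y\<in>set (X @ us). E (fst m) (fst y))"
proof -
  obtain p s where ps: "X @ Z = p @ m # s" and p: "\<forall>y\<in>set p. E (fst m) (fst y)"
    using assms(1) unfolding leading_def by blast
  consider (inside) us where "X = p @ us" "us @ Z = m # s"
    | (beyond) us where "p = X @ us" "Z = us @ m # s"
    using ps by (auto simp: append_eq_append_conv2)
  then show ?thesis
  proof cases
    case inside
    have "us = []"
    proof (rule ccontr)
      assume "us \<noteq> []"
      then have "X = p @ m # tl us" using inside by (cases us) auto
      then show False using assms(2) p unfolding leading_def by blast
    qed
    then show ?thesis using inside p by (intro exI[of _ "[]"] exI[of _ s]) auto
  next
    case beyond
    then show ?thesis using p by auto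
  qed
qed

context simple_graph
begin

lemma comm_swap_sym: "comm_swap E a b \<Longrightarrow> comm_swap E b a"
proof (induct rule: comm_swap.induct)
  case (1 a c xs ys)
  show ?case by (rule comm_swap.intros) (rule sym, fact)
qed

lemma comm_equiv_sym: "comm_equiv E a b \<Longrightarrow> comm_equiv E b a"
  by (induct rule: rtranclp_induct)
    (auto intro: comm_swap_sym converse_rtranclp_into_rtranclp)

lemma comm_equiv_move_left: "\<forall>y\<in>set p. E (fst l) (fst y) \<Longrightarrow> comm_equiv E (p @ [l]) (l # p)"
  using comm_equiv_move_right comm_equiv_sym by blast

lemma leading_iff_proj_pair:
  "leading E l r \<longleftrightarrow> (\<forall>b. \<not> E (fst l) b \<longrightarrow> (\<exists>t. proj_pair (fst l) b r = l # t))"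
proof
  assume "leading E l r"
  then obtain p s where r: "r = p @ l # s" and p: "\<forall>y\<in>set p. E (fst l) (fst y)"
    unfolding leading_def by blast
  show "\<forall>b. \<not> E (fst l) b \<longrightarrow> (\<exists>t. proj_pair (fst l) b r = l # t)"
  proof (intro allI impI)
    fix b
    assume "\<not> E (fst l) b"
    then have "proj_pair (fst l) b p = []"
      using p irrefl unfolding proj_pair_def by (auto simp: filter_empty_conv)
    then show "\<exists>t. proj_pair (fst l) b r = l # t" by (simp add: r proj_pair_def)
  qed
next
  assume H: "\<forall>b. \<not> E (fst l) b \<longrightarrow> (\<exists>t. proj_pair (fst l) b r = l # t)"
  then obtain t where "proj_pair (fst l) (fst l) r = l # t" using irrefl by blast
  then have "l \<in> set r"
    unfolding proj_pair_def by (metis filter_is_subset list.set_intros(1) subsetD)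
  then have "\<exists>y\<in>set r. \<not> E (fst l) (fst y)" using irrefl by blast
  then obtain p y s where r: "r = p @ y # s" and p: "\<forall>z\<in>set p. E (fst l) (fst z)"
      and y: "\<not> E (fst l) (fst y)"
    using split_list_first_prop[of r "\<lambda>y. \<not> E (fst l) (fst y)"] by blast
  have "proj_pair (fst l) (fst y) p = []"
    unfolding proj_pair_def filter_empty_conv using p y irrefl by metis
  then have "proj_pair (fst l) (fst y) r = y # proj_pair (fst l) (fst y) s"
    by (simp add: r proj_pair_def)
  with H y have "y = l" by auto
  with r p show "leading E l r" unfolding leading_def by auto
qed

lemma leading_proj_equiv_iff: "proj_equiv E a b \<Longrightarrow> leading E l a \<longleftrightarrow> leading E l b"
  unfolding leading_iff_proj_pair proj_equiv_def by metis

lemma proj_equiv_Nil: "proj_equiv E [] b \<Longrightarrow> b = []"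
proof (cases b)
  case (Cons y b')
  assume "proj_equiv E [] b"
  then have "proj_pair (fst y) (fst y) [] = proj_pair (fst y) (fst y) b"
    unfolding proj_equiv_def using irrefl by blast
  then show ?thesis using Cons by (simp add: proj_pair_def)
qed simp

lemma proj_pair_leading_remove:
  assumes "\<forall>y\<in>set p. E (fst l) (fst y)" "\<not> E x z"
  shows "proj_pair x z (l # p @ s) = proj_pair x z (p @ l # s)"
proof (cases "fst l = x \<or> fst l = z")
  case True
  have "proj_pair x z p = []"
    unfolding proj_pair_def filter_empty_conv using assms True irrefl sym by metis
  then show ?thesis by (simp add: proj_pair_def)
qed (simp add: proj_pair_def)

lemma proj_equiv_imp_comm_equiv: "proj_equiv E a b \<Longrightarrow> comm_equiv E a b"
proof (induct a arbitrary: b)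
  case Nil
  then show ?case using proj_equiv_Nil by auto
next
  case (Cons l a)
  have "leading E l b" using Cons.prems leading_proj_equiv_iff leading_Cons_self by blast
  then obtain p s where b: "b = p @ l # s" and p: "\<forall>y\<in>set p. E (fst l) (fst y)"
    unfolding leading_def by blast
  have "proj_equiv E (l # a) (l # p @ s)"
    using Cons.prems proj_pair_leading_remove[OF p] unfolding b proj_equiv_def by metis
  then have "proj_equiv E a (p @ s)"
    unfolding proj_equiv_def proj_pair_def by (auto split: if_splits)
  then have "comm_equiv E (l # a) (l # p @ s)" by (intro comm_equiv_Cons Cons.hyps)
  also have "comm_equiv E (l # p @ s) (p @ l # s)" using comm_equiv_move[where E=E, OF p, of "[]" s] by simp
  finally show ?case using b by simp
qed

lemma comm_swap_imp_proj_equiv: "comm_swap E a b \<Longrightarrow> proj_equiv E a b"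
proof (induct rule: comm_swap.induct)
  case (1 a c xs ys)
  have "\<not> ((fst a = p \<or> fst a = q) \<and> (fst c = p \<or> fst c = q))" if "\<not> E p q" for p q
    using 1 that irrefl sym by metis
  then show ?case unfolding proj_equiv_def by (auto simp: proj_pair_def)
qed

lemma comm_equiv_imp_proj_equiv: "comm_equiv E a b \<Longrightarrow> proj_equiv E a b"
  by (induct rule: rtranclp_induct) (auto dest: comm_swap_imp_proj_equiv intro: proj_equiv_trans)

lemma proj_equiv_length: "proj_equiv E a b \<Longrightarrow> length a = length b"
  using proj_equiv_imp_comm_equiv comm_equiv_length by blast

lemma proj_equiv_set: "proj_equiv E a b \<Longrightarrow> set a = set b"
  using proj_equiv_imp_comm_equiv comm_equiv_set by blast

end

section \<open>Normal forms and reduced words\<close>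

definition push_letter :: "('v \<Rightarrow> 'v \<Rightarrow> bool) \<Rightarrow> 'v letter \<Rightarrow> 'v letter list \<Rightarrow> 'v letter list" where
  "push_letter E l r = (if leading E (letter_inv l) r then remove1 (letter_inv l) r else l # r)"

definition normal_form :: "('v \<Rightarrow> 'v \<Rightarrow> bool) \<Rightarrow> 'v letter list \<Rightarrow> 'v letter list" where
  "normal_form E w = foldr (push_letter E) w []"

fun reduced :: "('v \<Rightarrow> 'v \<Rightarrow> bool) \<Rightarrow> 'v letter list \<Rightarrow> bool" where
  "reduced E [] = True"
| "reduced E (l # r) = (\<not> leading E (letter_inv l) r \<and> reduced E r)"

lemma normal_form_Nil [simp]: "normal_form E [] = []"
  by (simp add: normal_form_def)

lemma normal_form_Cons: "normal_form E (l # w) = push_letter E l (normal_form E w)"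
  by (simp add: normal_form_def)

lemma normal_form_append: "normal_form E (a @ b) = foldr (push_letter E) a (normal_form E b)"
  by (simp add: normal_form_def)

lemma length_push_letter:
  "length (push_letter E l r) = (if leading E (letter_inv l) r then length r - 1 else Suc (length r))"
  unfolding push_letter_def leading_def by (auto simp: length_remove1)

lemma length_normal_form_le: "length (normal_form E w) \<le> length w"
  by (induct w) (auto simp: normal_form_Cons length_push_letter)

lemma set_normal_form: "set (normal_form E w) \<subseteq> set w"
proof (induct w)
  case (Cons l w)
  have "set (push_letter E l r) \<subseteq> insert l (set r)" for r
    unfolding push_letter_def using set_remove1_subset[of "letter_inv l" r] by auto
  with Cons show ?case by (auto simp: normal_form_Cons)
qed simp

lemma reduced_appendD1: "reduced E (a @ b) \<Longrightarrow> reduced E a"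
  by (induct a) (auto dest: leading_append)

lemma reduced_appendD2: "reduced E (a @ b) \<Longrightarrow> reduced E b"
  by (induct a) auto

context simple_graph
begin

lemma remove1_leading:
  assumes "\<forall>y\<in>set p. E (fst l) (fst y)"
  shows "remove1 l (p @ l # s) = p @ s"
proof -
  have "l \<notin> set p" using assms irrefl by blast
  then show ?thesis by (simp add: remove1_append)
qed

lemma push_letter_proj_equiv:
  assumes "proj_equiv E a b"
  shows "proj_equiv E (push_letter E l a) (push_letter E l b)"
proof (cases "leading E (letter_inv l) a")
  case True
  then have "leading E (letter_inv l) b" using leading_proj_equiv_iff[OF assms] by blast
  then show ?thesis
    using True assms unfolding push_letter_def proj_equiv_def by (simp add: proj_pair_remove1)
next
  case False
  then have "\<not> leading E (letter_inv l) b" using leading_proj_equiv_iff[OF assms] by blast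
  then show ?thesis using False assms unfolding push_letter_def by (simp add: proj_equiv_Cons)
qed

lemma foldr_push_letter_proj_equiv:
  "proj_equiv E a b \<Longrightarrow> proj_equiv E (foldr (push_letter E) xs a) (foldr (push_letter E) xs b)"
  by (induct xs) (auto intro: push_letter_proj_equiv)

lemma proj_pair_push_letter:
  assumes "\<not> E p q"
  shows "proj_pair p q (push_letter E l r) =
    (if fst l = p \<or> fst l = q then
       (if leading E (letter_inv l) r then tl (proj_pair p q r) else l # proj_pair p q r)
     else proj_pair p q r)"
proof (cases "leading E (letter_inv l) r \<and> (fst l = p \<or> fst l = q)")
  case True
  moreover have "\<not> E q p" using assms sym by blast
  ultimately obtain t where "proj_pair p q r = letter_inv l # t"
    using assms unfolding leading_iff_proj_pair by (metis fst_letter_inv proj_pair_commute)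
  then show ?thesis using True by (simp add: push_letter_def proj_pair_remove1)
next
  case outside: False
  show ?thesis
  proof (cases "leading E (letter_inv l) r")
    case True
    with outside show ?thesis by (simp add: push_letter_def proj_pair_remove1)
  next
    case False
    then show ?thesis by (simp add: push_letter_def proj_pair_def)
  qed
qed

lemma leading_push_letter_adjacent:
  assumes "E (fst a) (fst m)"
  shows "leading E m (push_letter E a r) \<longleftrightarrow> leading E m r"
proof -
  have "proj_pair (fst m) b (push_letter E a r) = proj_pair (fst m) b r" if "\<not> E (fst m) b" for b
    using proj_pair_push_letter[OF that, of a r] assms that sym irrefl by metis
  then show ?thesis unfolding leading_iff_proj_pair by auto
qed

lemma push_letter_commute:
  assumes "E (fst a) (fst c)"
  shows "proj_equiv E (push_letter E a (push_letter E c r)) (push_letter E c (push_letter E a r))"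
  unfolding proj_equiv_def
proof (intro allI impI)
  fix p q
  assume pq: "\<not> E p q"
  have not_both: "\<not> ((fst a = p \<or> fst a = q) \<and> (fst c = p \<or> fst c = q))"
    using assms pq sym irrefl by metis
  have "leading E (letter_inv a) (push_letter E c r) \<longleftrightarrow> leading E (letter_inv a) r"
    using leading_push_letter_adjacent[of c "letter_inv a" r] assms sym by simp
  moreover have "leading E (letter_inv c) (push_letter E a r) \<longleftrightarrow> leading E (letter_inv c) r"
    using leading_push_letter_adjacent[of a "letter_inv c" r] assms by simp
  ultimately show "proj_pair p q (push_letter E a (push_letter E c r)) =
      proj_pair p q (push_letter E c (push_letter E a r))"
    using not_both by (cases "fst a = p \<or> fst a = q") (simp_all add: proj_pair_push_letter[OF pq])
qed

lemma leading_insert_adjacent: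
  assumes "leading E m (p @ s)" "E (fst m) (fst x)"
  shows "leading E m (p @ x # s)"
proof -
  obtain q t where qt: "p @ s = q @ m # t" and q: "\<forall>y\<in>set q. E (fst m) (fst y)"
    using assms(1) unfolding leading_def by blast
  consider (before) us where "p = q @ us" "us @ s = m # t"
    | (after) us where "q = p @ us" "s = us @ m # t"
    using qt by (auto simp: append_eq_append_conv2)
  then show ?thesis
  proof cases
    case before
    show ?thesis
    proof (cases us)
      case Nil
      then have "p @ x # s = (q @ [x]) @ m # t" using before by simp
      then show ?thesis using q assms(2) unfolding leading_def by fastforce
    next
      case (Cons u us')
      then have "p @ x # s = q @ m # (us' @ x # s)" using before by simp
      then show ?thesis using q unfolding leading_def by blast
    qed
  next
    case after
    then have "p @ x # s = (p @ x # us) @ m # t" by simp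
    then show ?thesis using q after assms(2) unfolding leading_def by fastforce
  qed
qed

lemma reduced_remove_leading:
  "reduced E (p @ x # s) \<Longrightarrow> \<forall>y\<in>set p. E (fst x) (fst y) \<Longrightarrow> reduced E (p @ s)"
proof (induct p)
  case (Cons y p)
  have "E (fst (letter_inv y)) (fst x)" using Cons.prems sym by auto
  then show ?case using Cons leading_insert_adjacent[of "letter_inv y" p s x] by auto
qed simp

lemma reduced_push_letter: "reduced E r \<Longrightarrow> reduced E (push_letter E l r)"
proof (cases "leading E (letter_inv l) r")
  case True
  then obtain p s where r: "r = p @ letter_inv l # s"
    and p: "\<forall>y\<in>set p. E (fst (letter_inv l)) (fst y)"
    unfolding leading_def by blast
  assume "reduced E r"
  then have "reduced E (p @ s)" using reduced_remove_leading p r by blast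
  then show ?thesis using True remove1_leading[OF p] r by (simp add: push_letter_def)
qed (simp add: push_letter_def)

lemma reduced_normal_form: "reduced E (normal_form E w)"
  by (induct w) (auto simp: normal_form_Cons intro: reduced_push_letter)

lemma push_letter_cancel:
  assumes red: "reduced E r"
  shows "proj_equiv E (push_letter E l (push_letter E (letter_inv l) r)) r"
proof (cases "leading E l r")
  case True
  then obtain p s where r: "r = p @ l # s" and p: "\<forall>y\<in>set p. E (fst l) (fst y)"
    unfolding leading_def by blast
  have pushed: "push_letter E (letter_inv l) r = p @ s"
    using True remove1_leading[OF p] r by (simp add: push_letter_def)
  have "\<not> leading E (letter_inv l) (p @ s)"
  proof
    assume "leading E (letter_inv l) (p @ s)"
    then obtain p' s' where ps: "p @ s = p' @ letter_inv l # s'"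
      and p': "\<forall>y\<in>set p'. E (fst l) (fst y)"
      unfolding leading_def by auto
    have "letter_inv l \<notin> set p" using p irrefl by fastforce
    then obtain s1 where s1: "s = s1 @ letter_inv l # s'" "p' = p @ s1"
      using ps by (auto simp: append_eq_append_conv2 append_eq_Cons_conv)
    have "reduced E (l # s1 @ letter_inv l # s')"
      using red r s1 reduced_appendD2[of E p "l # s1 @ letter_inv l # s'"] by simp
    moreover have "leading E (letter_inv l) (s1 @ letter_inv l # s')"
      using p' s1 unfolding leading_def by auto
    ultimately show False by simp
  qed
  then have "push_letter E l (push_letter E (letter_inv l) r) = l # p @ s"
    using pushed by (simp add: push_letter_def)
  also have "proj_equiv E \<dots> r"
    unfolding r using comm_equiv_move[where E=E, OF p, of "[]" s] comm_equiv_imp_proj_equiv by simp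
  finally show ?thesis .
next
  case False
  then show ?thesis by (simp add: push_letter_def)
qed

lemma rstep_normal_form: "rstep E a b \<Longrightarrow> proj_equiv E (normal_form E a) (normal_form E b)"
proof (induct rule: rstep.induct)
  case (cancel xs a b ys)
  have "proj_equiv E (push_letter E (a, b) (push_letter E (letter_inv (a, b)) (normal_form E ys)))
      (normal_form E ys)"
    by (rule push_letter_cancel) (rule reduced_normal_form)
  then show ?case
    by (auto simp: normal_form_append normal_form_Cons letter_inv_def
        intro: foldr_push_letter_proj_equiv)
next
  case (comm a c xs b d ys)
  then have "proj_equiv E (push_letter E (a, b) (push_letter E (c, d) (normal_form E ys)))
      (push_letter E (c, d) (push_letter E (a, b) (normal_form E ys)))"
    using push_letter_commute[of "(a, b)" "(c, d)"] by simp
  then show ?case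
    by (auto simp: normal_form_append normal_form_Cons intro: foldr_push_letter_proj_equiv)
qed

lemma req_normal_form: "req E a b \<Longrightarrow> proj_equiv E (normal_form E a) (normal_form E b)"
  unfolding req_def
proof (induct rule: equivclp_induct)
  case (step y z)
  then show ?case using rstep_normal_form proj_equiv_trans proj_equiv_sym by (metis symclp_def)
qed simp

lemma push_letter_req: "req E (push_letter E l r) (l # r)"
proof (cases "leading E (letter_inv l) r")
  case True
  then obtain p s where r: "r = p @ letter_inv l # s" and p: "\<forall>y\<in>set p. E (fst l) (fst y)"
    unfolding leading_def by auto
  have "push_letter E l r = p @ s"
    using True remove1_leading[of p "letter_inv l" s] r p by (simp add: push_letter_def)
  also have "req E (p @ s) (p @ [l, letter_inv l] @ s)"
    using req_in_context[OF req_cancel[of E l "[]"], of p s] by (simp add: req_sym)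
  also have "req E \<dots> (l # r)"
    using comm_equiv_req[OF comm_equiv_move_left[OF p]]
      req_in_context[of E "p @ [l]" "l # p" "[]" "letter_inv l # s"] r
    by simp
  finally show ?thesis .
qed (simp add: push_letter_def)

lemma normal_form_req: "req E (normal_form E w) w"
proof (induct w)
  case (Cons l w)
  have "req E (normal_form E (l # w)) (l # normal_form E w)"
    by (simp add: normal_form_Cons push_letter_req)
  also have "req E \<dots> (l # w)" using Cons by (rule req_Cons)
  finally show ?case .
qed simp

lemma reduced_normal_form_proj_equiv: "reduced E w \<Longrightarrow> proj_equiv E (normal_form E w) w"
proof (induct w)
  case (Cons l w)
  then have "proj_equiv E (push_letter E l (normal_form E w)) (push_letter E l w)"
    by (auto intro: push_letter_proj_equiv)
  moreover have "push_letter E l w = l # w" using Cons.prems by (simp add: push_letter_def)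
  ultimately show ?case by (simp add: normal_form_Cons)
qed simp

lemma length_normal_form_eq_imp_reduced: "length (normal_form E w) = length w \<Longrightarrow> reduced E w"
proof (induct w)
  case (Cons l w)
  have "\<not> leading E (letter_inv l) (normal_form E w) \<and> length (normal_form E w) = length w"
    using Cons.prems length_normal_form_le[of E w]
    by (auto simp: normal_form_Cons length_push_letter split: if_splits)
  moreover from this have "reduced E w" using Cons.hyps by blast
  ultimately show ?case
    using reduced_normal_form_proj_equiv leading_proj_equiv_iff by (metis reduced.simps(2))
qed simp

lemma rnorm_eq_length_normal_form: "rnorm E w = length (normal_form E w)"
  unfolding rnorm_def
proof (rule Least_equality)
  show "\<exists>w'. length w' = length (normal_form E w) \<and> req E w' w"
    using normal_form_req by blast
next
  fix n
  assume "\<exists>w'. length w' = n \<and> req E w' w"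
  then obtain w' where "length w' = n" "req E w' w" by blast
  then have "length (normal_form E w) = length (normal_form E w')"
    using req_normal_form proj_equiv_length by metis
  then show "length (normal_form E w) \<le> n"
    using length_normal_form_le[of E w'] \<open>length w' = n\<close> by simp
qed

lemma reduced_iff_rnorm: "reduced E w \<longleftrightarrow> rnorm E w = length w"
  using reduced_normal_form_proj_equiv length_normal_form_eq_imp_reduced proj_equiv_length
    rnorm_eq_length_normal_form
  by metis

lemma reduced_comm_equiv: "comm_equiv E a b \<Longrightarrow> reduced E a \<Longrightarrow> reduced E b"
  using req_normal_form[OF comm_equiv_req] proj_equiv_length comm_equiv_length
    reduced_iff_rnorm rnorm_eq_length_normal_form
  by metis

lemma rnorm_winv: "rnorm E (winv w) = rnorm E w"
proof -
  have le: "rnorm E (winv w) \<le> rnorm E w" for w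
  proof -
    have "req E (winv (normal_form E w)) (winv w)" using req_winv normal_form_req by blast
    then have "rnorm E (winv w) \<le> length (winv (normal_form E w))"
      unfolding rnorm_def by (intro Least_le) blast
    then show ?thesis by (simp add: rnorm_eq_length_normal_form winv_def)
  qed
  from le[of w] le[of "winv w"] show ?thesis by simp
qed

lemma reduced_winv: "reduced E w \<Longrightarrow> reduced E (winv w)"
  using rnorm_winv reduced_iff_rnorm by (simp add: winv_def)

lemma geodesic_reduced: "req E w x \<Longrightarrow> length w = rnorm E x \<Longrightarrow> reduced E w"
  using req_normal_form proj_equiv_length rnorm_eq_length_normal_form reduced_iff_rnorm by metis

end

section \<open>Membership in Z(u) and Z(v)Z(u) for reduced words\<close>

text \<open>\<open>pull_out E {} S w\<close> collects the letters of w over S that can be commuted to the front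
  past everything left behind, \<open>pull_rest E {} S w\<close> is what remains; K records the vertices of
  the letters left behind so far.\<close>

fun pull_out :: "('v \<Rightarrow> 'v \<Rightarrow> bool) \<Rightarrow> 'v set \<Rightarrow> 'v set \<Rightarrow> 'v letter list \<Rightarrow> 'v letter list" where
  "pull_out E K S [] = []"
| "pull_out E K S (l # w) =
    (if fst l \<in> S \<and> (\<forall>k\<in>K. E (fst l) k) then l # pull_out E K S w
     else pull_out E (insert (fst l) K) S w)"

fun pull_rest :: "('v \<Rightarrow> 'v \<Rightarrow> bool) \<Rightarrow> 'v set \<Rightarrow> 'v set \<Rightarrow> 'v letter list \<Rightarrow> 'v letter list" where
  "pull_rest E K S [] = []"
| "pull_rest E K S (l # w) =
    (if fst l \<in> S \<and> (\<forall>k\<in>K. E (fst l) k) then pull_rest E K S w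
     else l # pull_rest E (insert (fst l) K) S w)"

lemma set_pull_out: "l \<in> set (pull_out E K S w) \<Longrightarrow> fst l \<in> S"
  by (induct w arbitrary: K) (auto split: if_splits)

lemma set_pull_rest: "set (pull_rest E K S w) \<subseteq> set w"
  by (induct w arbitrary: K) auto

lemma pull_rest_append:
  "pull_rest E K S (a @ b) = pull_rest E K S a @ pull_rest E (K \<union> fst ` set (pull_rest E K S a)) S b"
  by (induct a arbitrary: K) (auto simp: insert_commute)

lemma pull_rest_append_pulled: "\<forall>l\<in>set g. fst l \<in> S \<Longrightarrow> pull_rest E {} S (g @ h) = pull_rest E {} S h"
  by (induct g) auto

lemma foldr_push_letter_split:
  assumes "\<forall>l\<in>set g. fst l \<in> S" "\<forall>l\<in>set r. fst l \<in> T"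
  shows "\<exists>g' h'. foldr (push_letter E) g r = g' @ h' \<and> (\<forall>l\<in>set g'. fst l \<in> S) \<and> (\<forall>l\<in>set h'. fst l \<in> T)"
  using assms(1)
proof (induct g)
  case Nil
  show ?case using assms(2) by (intro exI[of _ "[]"] exI[of _ r]) auto
next
  case (Cons l g)
  then obtain g' h' where gh: "foldr (push_letter E) g r = g' @ h'"
    and g': "\<forall>l\<in>set g'. fst l \<in> S" and h': "\<forall>l\<in>set h'. fst l \<in> T"
    by auto
  have g'': "\<forall>l\<in>set (remove1 (letter_inv l) g'). fst l \<in> S"
    using g' set_remove1_subset[of "letter_inv l" g'] by blast
  have h'': "\<forall>l\<in>set (remove1 (letter_inv l) h'). fst l \<in> T"
    using h' set_remove1_subset[of "letter_inv l" h'] by blast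
  consider "push_letter E l (g' @ h') = (l # g') @ h'"
    | "push_letter E l (g' @ h') = remove1 (letter_inv l) g' @ h'"
    | "push_letter E l (g' @ h') = g' @ remove1 (letter_inv l) h'"
    unfolding push_letter_def remove1_append by (metis append_Cons)
  then show ?case
  proof cases
    case 1
    then show ?thesis using Cons.prems g' h' gh by (intro exI[of _ "l # g'"] exI[of _ h']) simp
  next
    case 2
    then show ?thesis using g'' h' gh by (intro exI[of _ "remove1 (letter_inv l) g'"] exI[of _ h']) simp
  next
    case 3
    then show ?thesis using g' h'' gh by (intro exI[of _ g'] exI[of _ "remove1 (letter_inv l) h'"]) simp
  qed
qed

context simple_graph
begin

definition star_vertices :: "'v \<Rightarrow> 'v set" where
  "star_vertices u = {a. a = u \<or> E u a}"

lemma comm_equiv_pull: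
  "\<forall>y\<in>set P. fst y \<in> K \<Longrightarrow> comm_equiv E (P @ w) (pull_out E K S w @ P @ pull_rest E K S w)"
proof (induct w arbitrary: P K)
  case (Cons l w)
  show ?case
  proof (cases "fst l \<in> S \<and> (\<forall>k\<in>K. E (fst l) k)")
    case True
    then have "\<forall>y\<in>set P. E (fst l) (fst y)" using Cons.prems by blast
    then have "comm_equiv E (P @ l # w) (l # P @ w)"
      using comm_equiv_sym[OF comm_equiv_move[of P E l "[]" w]] by simp
    also have "comm_equiv E (l # P @ w) (l # pull_out E K S w @ P @ pull_rest E K S w)"
      using Cons.hyps[OF Cons.prems] by (rule comm_equiv_Cons)
    finally show ?thesis using True by simp
  next
    case False
    have "\<forall>y\<in>set (P @ [l]). fst y \<in> insert (fst l) K" using Cons.prems by auto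
    from Cons.hyps[OF this] show ?thesis
      by (simp only: pull_out.simps pull_rest.simps if_not_P[OF False]) simp
  qed
qed simp

lemma set_pull_rest_comm_swap:
  "comm_swap E w w' \<Longrightarrow> set (pull_rest E K S w) = set (pull_rest E K S w')"
proof (induct rule: comm_swap.induct)
  case (1 a c xs ys)
  let ?K = "K \<union> fst ` set (pull_rest E K S xs)"
  have pair: "set (pull_rest E ?K S [a, c]) = set (pull_rest E ?K S [c, a])"
    using 1 sym by (cases "fst a \<in> S \<and> (\<forall>k\<in>?K. E (fst a) k)";
        cases "fst c \<in> S \<and> (\<forall>k\<in>?K. E (fst c) k)") auto
  have split: "pull_rest E K S (xs @ p @ ys) = pull_rest E K S xs @ pull_rest E ?K S p @
      pull_rest E (?K \<union> fst ` set (pull_rest E ?K S p)) S ys" for p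
    unfolding pull_rest_append[of E K S xs] pull_rest_append[of E ?K S p ys] by (rule refl)
  show ?case unfolding split set_append pair by (rule refl)
qed

lemma set_pull_rest_comm_equiv:
  "comm_equiv E w w' \<Longrightarrow> set (pull_rest E K S w) = set (pull_rest E K S w')"
  by (induct rule: rtranclp_induct) (auto dest: set_pull_rest_comm_swap[of _ _ K S])

lemma inZ_reduced_iff: "reduced E w \<Longrightarrow> inZ E u w \<longleftrightarrow> (\<forall>l\<in>set w. fst l = u \<or> E u (fst l))"
proof
  assume red: "reduced E w" and "inZ E u w"
  then obtain g where g: "\<forall>l\<in>set g. fst l = u \<or> E u (fst l)" "req E w g"
    unfolding inZ_def by blast
  have "set w = set (normal_form E w)"
    using proj_equiv_set[OF reduced_normal_form_proj_equiv[OF red]] by simp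
  also have "\<dots> = set (normal_form E g)" using proj_equiv_set[OF req_normal_form[OF g(2)]] .
  finally show "\<forall>l\<in>set w. fst l = u \<or> E u (fst l)" using set_normal_form[of E g] g(1) by blast
next
  assume "\<forall>l\<in>set w. fst l = u \<or> E u (fst l)"
  then show "inZ E u w" unfolding inZ_def by (intro exI[of _ w]) simp
qed

lemma inZZ_reduced_iff:
  assumes red: "reduced E w"
  shows "inZZ E v u w \<longleftrightarrow>
    (\<forall>l\<in>set (pull_rest E {} (star_vertices v) w). fst l \<in> star_vertices u)"
proof
  assume "inZZ E v u w"
  then obtain g h where g: "\<forall>l\<in>set g. fst l \<in> star_vertices v"
    and h: "\<forall>l\<in>set h. fst l \<in> star_vertices u" and gh: "req E w (g @ h)"
    unfolding inZZ_def star_vertices_def mem_Collect_eq by blast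
  have "\<forall>l\<in>set (normal_form E h). fst l \<in> star_vertices u"
    using h set_normal_form[of E h] by blast
  then obtain g' h' where g'h': "foldr (push_letter E) g (normal_form E h) = g' @ h'"
    and g': "\<forall>l\<in>set g'. fst l \<in> star_vertices v" and h': "\<forall>l\<in>set h'. fst l \<in> star_vertices u"
    using foldr_push_letter_split[OF g, of "normal_form E h" _ E] by blast
  have "proj_equiv E (normal_form E w) (g' @ h')"
    using req_normal_form[OF gh] g'h' by (simp add: normal_form_append)
  then have "proj_equiv E w (g' @ h')"
    using proj_equiv_trans[OF proj_equiv_sym[OF reduced_normal_form_proj_equiv[OF red]]] by blast
  then have "set (pull_rest E {} (star_vertices v) w) = set (pull_rest E {} (star_vertices v) (g' @ h'))"
    by (intro set_pull_rest_comm_equiv proj_equiv_imp_comm_equiv)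
  also have "\<dots> = set (pull_rest E {} (star_vertices v) h')"
    by (simp only: pull_rest_append_pulled[OF g'])
  finally show "\<forall>l\<in>set (pull_rest E {} (star_vertices v) w). fst l \<in> star_vertices u"
    using set_pull_rest[of E "{}" "star_vertices v" h'] h' by blast
next
  assume rest: "\<forall>l\<in>set (pull_rest E {} (star_vertices v) w). fst l \<in> star_vertices u"
  let ?g = "pull_out E {} (star_vertices v) w" and ?h = "pull_rest E {} (star_vertices v) w"
  have "req E w (?g @ ?h)"
    using comm_equiv_req[OF comm_equiv_pull[of "[]" "{}" w "star_vertices v"]] by simp
  moreover have "\<forall>l\<in>set ?g. fst l = v \<or> E v (fst l)"
    using set_pull_out[of _ E "{}" "star_vertices v" w] unfolding star_vertices_def by blast
  moreover have "\<forall>l\<in>set ?h. fst l = u \<or> E u (fst l)"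
    using rest unfolding star_vertices_def by blast
  ultimately show "inZZ E v u w" unfolding inZZ_def by blast
qed

end

section \<open>Expanding letters to positive powers\<close>

inductive expands :: "'v letter list \<Rightarrow> 'v letter list \<Rightarrow> bool" where
  expands_Nil: "expands [] []"
| expands_Cons: "expands w x \<Longrightarrow> 0 < k \<Longrightarrow> expands (l # w) (replicate k l @ x)"

lemma expands_append: "expands a b \<Longrightarrow> expands c d \<Longrightarrow> expands (a @ c) (b @ d)"
  by (induct rule: expands.induct) (auto intro: expands.intros)

lemma expands_winv: "expands w x \<Longrightarrow> expands (winv w) (winv x)"
proof (induct rule: expands.induct)
  case (expands_Cons w x k l)
  then show ?case
    using expands_append[OF expands_Cons(2) expands.expands_Cons[OF expands_Nil expands_Cons(3)]]
    by (simp add: winv_replicate)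
qed (simp add: expands_Nil)

lemma set_expands: "expands w x \<Longrightarrow> set x = set w"
  by (induct rule: expands.induct) auto

lemma pull_rest_replicate_pulled:
  "fst l \<in> S \<Longrightarrow> \<forall>k\<in>K. E (fst l) k \<Longrightarrow> pull_rest E K S (replicate n l @ x) = pull_rest E K S x"
  by (induct n) auto

lemma leading_expands: "expands w x \<Longrightarrow> leading E m x \<Longrightarrow> leading E m w"
proof (induct rule: expands.induct)
  case (expands_Cons w x k l)
  then show ?case
    using leading_replicate[OF expands_Cons.prems] by (cases "m = l") (auto intro: leading_Cons_adjacent)
qed simp

context simple_graph
begin

lemma pull_rest_replicate_blocked:
  "fst l \<in> K \<Longrightarrow> pull_rest E K S (replicate n l @ x) = replicate n l @ pull_rest E K S x"
  using irrefl by (induct n) (auto simp: insert_absorb)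

lemma set_pull_rest_expands: "expands w x \<Longrightarrow> set (pull_rest E K S x) = set (pull_rest E K S w)"
proof (induct arbitrary: K rule: expands.induct)
  case (expands_Cons w x k l)
  show ?case
  proof (cases "fst l \<in> S \<and> (\<forall>k\<in>K. E (fst l) k)")
    case True
    then show ?thesis
      using pull_rest_replicate_pulled[of l S K E k x] expands_Cons by simp
  next
    case False
    obtain j where k: "k = Suc j" using expands_Cons by (cases k) auto
    have "pull_rest E K S (replicate k l @ x) = l # pull_rest E (insert (fst l) K) S (replicate j l @ x)"
      using k by (simp only: replicate_Suc append_Cons pull_rest.simps if_not_P[OF False])
    also have "\<dots> = l # replicate j l @ pull_rest E (insert (fst l) K) S x"
      by (simp add: pull_rest_replicate_blocked)
    finally show ?thesis
      using expands_Cons False by (simp only: pull_rest.simps if_not_P[OF False]) auto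
  qed
qed simp

lemma reduced_replicate:
  "\<not> leading E (letter_inv l) x \<Longrightarrow> reduced E x \<Longrightarrow> reduced E (replicate k l @ x)"
proof (induct k)
  case (Suc k)
  have "\<not> leading E (letter_inv l) (replicate k l @ x)"
    using Suc.prems(1) leading_replicate[of E "letter_inv l" k l x] irrefl by auto
  with Suc show ?case by simp
qed simp

lemma reduced_expands: "expands w x \<Longrightarrow> reduced E w \<Longrightarrow> reduced E x"
proof (induct rule: expands.induct)
  case (expands_Cons w x k l)
  then show ?case using leading_expands[of w x E "letter_inv l"] by (auto intro: reduced_replicate)
qed simp

end

section \<open>The map \<sigma>\<close>

definition is_tail_after :: "('v \<Rightarrow> 'v \<Rightarrow> bool) \<Rightarrow> 'v letter \<Rightarrow> 'v letter list \<Rightarrow> 'v letter list \<Rightarrow> bool" where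
  "is_tail_after E l S y = (\<exists>x. (\<forall>l'\<in>set x. E (fst l) (fst l')) \<and> req E S (x @ [l] @ y))"

definition rcount_suffix :: "('v \<Rightarrow> 'v \<Rightarrow> bool) \<Rightarrow> 'v letter \<Rightarrow> 'v letter list \<Rightarrow> nat" where
  "rcount_suffix E l S = (LEAST n. \<exists>y. is_tail_after E l S y \<and> rnorm E y = n)"

lemma rcount_eq_rcount_suffix: "rcount E w i = rcount_suffix E (w ! i) (drop i w)"
  unfolding rcount_def rcount_suffix_def is_tail_after_def
  by (intro arg_cong[where f = Least] ext) blast

lemma rcount_suffix_req:
  assumes "req E S S'"
  shows "rcount_suffix E l S = rcount_suffix E l S'"
  unfolding rcount_suffix_def is_tail_after_def by (simp add: req_cong[OF assms])

lemma is_tail_after_Cons_adjacent: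
  assumes "E (fst l) (fst c)"
  shows "is_tail_after E l (c # S) y \<longleftrightarrow> is_tail_after E l S y"
proof
  assume "is_tail_after E l (c # S) y"
  then obtain x where x: "\<forall>l'\<in>set x. E (fst l) (fst l')" "req E (c # S) (x @ [l] @ y)"
    unfolding is_tail_after_def by blast
  have "req E S (letter_inv c # c # S)" using req_sym[OF req_cancel_inv] .
  also have "req E \<dots> ((letter_inv c # x) @ [l] @ y)" using req_Cons[OF x(2)] by simp
  finally show "is_tail_after E l S y"
    unfolding is_tail_after_def using x(1) assms by (intro exI[of _ "letter_inv c # x"]) simp
next
  assume "is_tail_after E l S y"
  then obtain x where x: "\<forall>l'\<in>set x. E (fst l) (fst l')" "req E S (x @ [l] @ y)"
    unfolding is_tail_after_def by blast
  have "req E (c # S) ((c # x) @ [l] @ y)" using req_Cons[OF x(2)] by simp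
  then show "is_tail_after E l (c # S) y"
    unfolding is_tail_after_def using x(1) assms by (intro exI[of _ "c # x"]) simp
qed

lemma rcount_suffix_Cons_adjacent:
  assumes "E (fst l) (fst c)"
  shows "rcount_suffix E l (c # S) = rcount_suffix E l S"
  by (simp only: rcount_suffix_def is_tail_after_Cons_adjacent[where E = E, OF assms])

definition sigma_mult :: "nat \<Rightarrow> 'v letter \<Rightarrow> nat \<Rightarrow> nat" where
  "sigma_mult M l f = nat \<bar>((3 * lexp l - 1) div 2) * 4 ^ (M - 1 - f)\<bar>"

text \<open>The factor (3e - 1)/2 is 1 for e = 1 and -2 for e = -1, so \<sigma> replaces each letter by a
  positive power of itself.\<close>

lemma rpow_sigma_exponent:
  "rpow (fst l) (((3 * lexp l - 1) div 2) * 4 ^ k) = replicate (nat \<bar>((3 * lexp l - 1) div 2) * 4 ^ k\<bar>) l"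
  by (cases l; cases "snd l") (auto simp: rpow_def lexp_def)

lemma sigma_mult_pos: "0 < sigma_mult M l f"
  by (cases "snd l") (auto simp: sigma_mult_def lexp_def abs_mult)

fun sigma_prefix :: "('v \<Rightarrow> 'v \<Rightarrow> bool) \<Rightarrow> nat \<Rightarrow> 'v letter list \<Rightarrow> 'v letter list \<Rightarrow> 'v letter list" where
  "sigma_prefix E M [] Q = []"
| "sigma_prefix E M (l # X) Q =
    replicate (sigma_mult M l (rcount_suffix E l (l # X @ Q))) l @ sigma_prefix E M X Q"

lemma sigma_prefix_eq_concat:
  "sigma_prefix E M w Q = concat (map (\<lambda>i. replicate (sigma_mult M (w ! i)
     (rcount_suffix E (w ! i) (drop i w @ Q))) (w ! i)) [0..<length w])"
proof (induct w)
  case (Cons l w)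
  have "[0..<length (l # w)] = 0 # map Suc [0..<length w]"
    by (simp add: map_Suc_upt upt_conv_Cons del: upt_Suc)
  with Cons show ?case by (simp del: upt_Suc add: comp_def)
qed simp

lemma sigma_word_eq_sigma_prefix: "sigma_word E M w = sigma_prefix E M w []"
  unfolding sigma_word_def sigma_prefix_eq_concat rpow_sigma_exponent rcount_eq_rcount_suffix
  by (simp add: sigma_mult_def)

lemma sigma_prefix_append:
  "sigma_prefix E M (X @ Y) Q = sigma_prefix E M X (Y @ Q) @ sigma_prefix E M Y Q"
  by (induct X) auto

lemma expands_sigma_prefix: "expands X (sigma_prefix E M X Q)"
  by (induct X) (auto intro: expands.intros sigma_mult_pos)

lemma sigma_prefix_req: "req E Q Q' \<Longrightarrow> sigma_prefix E M X Q = sigma_prefix E M X Q'"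
proof (induct X)
  case (Cons l X)
  then show ?case
    using rcount_suffix_req[OF req_in_context[OF Cons.prems, of "l # X" "[]"]] by simp
qed simp

context simple_graph
begin

lemma sigma_prefix_swap:
  assumes "E (fst a) (fst c)"
  shows "comm_equiv E (sigma_prefix E M [a, c] Q) (sigma_prefix E M [c, a] Q)"
proof -
  have swap: "req E (a # c # Q) (c # a # Q)"
    using comm_swap_req[OF comm_swap.intros[where E = E, OF assms, of "[]" Q]] by simp
  have "rcount_suffix E a (a # c # Q) = rcount_suffix E a (c # a # Q)"
    "rcount_suffix E c (c # a # Q) = rcount_suffix E c (a # c # Q)"
    using rcount_suffix_req[OF swap] by simp_all
  then have blocks:
    "sigma_prefix E M [a, c] Q = replicate (sigma_mult M a (rcount_suffix E a (a # Q))) a @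
       replicate (sigma_mult M c (rcount_suffix E c (c # Q))) c"
    "sigma_prefix E M [c, a] Q = replicate (sigma_mult M c (rcount_suffix E c (c # Q))) c @
       replicate (sigma_mult M a (rcount_suffix E a (a # Q))) a"
    using assms sym by (simp_all add: rcount_suffix_Cons_adjacent)
  show ?thesis unfolding blocks using assms by (intro comm_equiv_replicate) simp
qed

lemma sigma_word_comm_swap: "comm_swap E w w' \<Longrightarrow> req E (sigma_word E M w) (sigma_word E M w')"
proof (induct rule: comm_swap.induct)
  case (1 a c xs ys)
  have "sigma_prefix E M xs ([a, c] @ ys) = sigma_prefix E M xs ([c, a] @ ys)"
    using sigma_prefix_req[OF comm_swap_req[OF comm_swap.intros[where E = E, OF 1, of "[]" ys]]]
    by simp
  moreover have "req E (sigma_prefix E M [a, c] ys) (sigma_prefix E M [c, a] ys)"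
    using comm_equiv_req sigma_prefix_swap[OF 1] by blast
  ultimately show ?case
    unfolding sigma_word_eq_sigma_prefix sigma_prefix_append
    using req_in_context[of E "sigma_prefix E M [a, c] ys" "sigma_prefix E M [c, a] ys"
        "sigma_prefix E M xs ([c, a] @ ys)" "sigma_prefix E M ys []"]
    by simp
qed

lemma sigma_word_comm_equiv: "comm_equiv E w w' \<Longrightarrow> req E (sigma_word E M w) (sigma_word E M w')"
  by (induct rule: rtranclp_induct) (auto intro: req_trans sigma_word_comm_swap)

end

section \<open>Common suffixes of geodesics\<close>

context simple_graph
begin

lemma common_last_letter:
  "reduced E X \<Longrightarrow> reduced E Y \<Longrightarrow> \<not> reduced E (X @ winv Y) \<Longrightarrow>
    \<exists>l X1 Y1. comm_equiv E X (X1 @ [l]) \<and> comm_equiv E Y (Y1 @ [l])"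
proof (induct X)
  case Nil
  then show ?case using reduced_winv by simp
next
  case (Cons l X0)
  have not_leading: "\<not> leading E (letter_inv l) X0" and red0: "reduced E X0"
    using Cons.prems by auto
  show ?case
  proof (cases "reduced E (X0 @ winv Y)")
    case False
    then obtain m X1 Y1 where "comm_equiv E X0 (X1 @ [m])" "comm_equiv E Y (Y1 @ [m])"
      using Cons.hyps[OF red0 Cons.prems(2)] by blast
    then have "comm_equiv E (l # X0) ((l # X1) @ [m])" by (auto intro: comm_equiv_Cons)
    with \<open>comm_equiv E Y (Y1 @ [m])\<close> show ?thesis by blast
  next
    case True
    then have "leading E (letter_inv l) (X0 @ winv Y)" using Cons.prems by simp
    then obtain us s where us: "winv Y = us @ letter_inv l # s"
      and commuting: "\<forall>y\<in>set (X0 @ us). E (fst l) (fst y)"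
      using leading_append_not_leading not_leading by fastforce
    have "comm_equiv E (l # X0) (X0 @ [l])"
      using commuting by (intro comm_equiv_move_right) simp
    moreover have "Y = winv s @ l # winv us" using arg_cong[OF us, of winv] by simp
    then have "comm_equiv E Y ((winv s @ winv us) @ [l])"
      using comm_equiv_move[of "winv us" E l "winv s" "[]"] commuting by (simp add: set_winv)
    ultimately show ?thesis by blast
  qed
qed

lemma common_suffix_decomposition:
  "reduced E X \<Longrightarrow> reduced E Y \<Longrightarrow>
    \<exists>X' Y' Q. comm_equiv E X (X' @ Q) \<and> comm_equiv E Y (Y' @ Q) \<and> reduced E (X' @ winv Y')"
proof (induct "length X" arbitrary: X Y rule: less_induct)
  case less
  show ?case
  proof (cases "reduced E (X @ winv Y)")
    case True
    then show ?thesis by (intro exI[of _ X] exI[of _ Y] exI[of _ "[]"]) simp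
  next
    case False
    then obtain l X1 Y1 where X1: "comm_equiv E X (X1 @ [l])" and Y1: "comm_equiv E Y (Y1 @ [l])"
      using common_last_letter[OF less.prems] by blast
    have "reduced E X1" using reduced_comm_equiv[OF X1 less.prems(1)] reduced_appendD1 by blast
    moreover have "reduced E Y1" using reduced_comm_equiv[OF Y1 less.prems(2)] reduced_appendD1 by blast
    moreover have "length X1 < length X" using comm_equiv_length[OF X1] by simp
    ultimately obtain X' Y' Q where d: "comm_equiv E X1 (X' @ Q)" "comm_equiv E Y1 (Y' @ Q)"
        "reduced E (X' @ winv Y')"
      using less.hyps by blast
    have "comm_equiv E X (X' @ Q @ [l])"
      using X1 comm_equiv_append[OF d(1), of "[l]" "[l]"] by simp
    moreover have "comm_equiv E Y (Y' @ Q @ [l])"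
      using Y1 comm_equiv_append[OF d(2), of "[l]" "[l]"] by simp
    ultimately show ?thesis using d(3) by blast
  qed
qed

lemma geodesic_representative:
  "req E (SOME w. req E w x \<and> length w = rnorm E x) x \<and>
    length (SOME w. req E w x \<and> length w = rnorm E x) = rnorm E x"
  by (rule someI[of _ "normal_form E x"]) (simp add: normal_form_req rnorm_eq_length_normal_form)

lemma quotient_reduced_expansion:
  obtains W V where "req E (x @ winv y) W" "req E (sigma E M x @ winv (sigma E M y)) V"
    "reduced E W" "expands W V"
proof -
  define X where "X = (SOME w. req E w x \<and> length w = rnorm E x)"
  define Y where "Y = (SOME w. req E w y \<and> length w = rnorm E y)"
  have X: "req E X x" "length X = rnorm E x" and Y: "req E Y y" "length Y = rnorm E y"
    using geodesic_representative[of x] geodesic_representative[of y] unfolding X_def Y_def by auto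
  obtain X' Y' Q where XQ: "comm_equiv E X (X' @ Q)" and YQ: "comm_equiv E Y (Y' @ Q)"
    and red: "reduced E (X' @ winv Y')"
    using common_suffix_decomposition[OF geodesic_reduced[OF X] geodesic_reduced[OF Y]] by blast
  have "req E (x @ winv y) (X @ winv Y)"
    using req_append[OF req_sym[OF X(1)] req_winv[OF req_sym[OF Y(1)]]] .
  also have "req E \<dots> ((X' @ Q) @ winv (Y' @ Q))"
    using req_append[OF comm_equiv_req[OF XQ] req_winv[OF comm_equiv_req[OF YQ]]] .
  also have "req E \<dots> (X' @ winv Y')" by (rule req_cancel_common_suffix)
  finally have W: "req E (x @ winv y) (X' @ winv Y')" .
  let ?A = "sigma_prefix E M X' Q" and ?B = "sigma_prefix E M Y' Q" and ?S = "sigma_word E M Q"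
  have "sigma E M x = sigma_word E M X" "sigma E M y = sigma_word E M Y"
    unfolding sigma_def X_def Y_def by (rule refl)+
  then have "req E (sigma E M x @ winv (sigma E M y))
      (sigma_word E M (X' @ Q) @ winv (sigma_word E M (Y' @ Q)))"
    using req_append[OF sigma_word_comm_equiv[OF XQ] req_winv[OF sigma_word_comm_equiv[OF YQ]]]
    by simp
  also have "sigma_word E M (X' @ Q) @ winv (sigma_word E M (Y' @ Q)) = (?A @ ?S) @ winv (?B @ ?S)"
    by (simp add: sigma_word_eq_sigma_prefix sigma_prefix_append)
  also have "req E \<dots> (?A @ winv ?B)" by (rule req_cancel_common_suffix)
  finally have V: "req E (sigma E M x @ winv (sigma E M y)) (?A @ winv ?B)" .
  have "expands (X' @ winv Y') (?A @ winv ?B)"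
    by (intro expands_append expands_winv expands_sigma_prefix)
  with W V red show ?thesis by (rule that)
qed

end

theorem lemma3p5:
  fixes E :: "'v::finite \<Rightarrow> 'v \<Rightarrow> bool" and M :: nat
    and u v :: 'v and x y :: "'v letter list"
  assumes "\<forall>a b. E a b \<longrightarrow> E b a"
    and "\<forall>a. \<not> E a a"
    and "M > 0"
    and "rnorm E x \<le> M" and "rnorm E y \<le> M"
  shows "(inZ E u (x @ winv y) \<longleftrightarrow> inZ E u (sigma E M x @ winv (sigma E M y))) \<and>
         (inZZ E v u (x @ winv y) \<longleftrightarrow> inZZ E v u (sigma E M x @ winv (sigma E M y)))"
proof -
  interpret simple_graph E using assms(1,2) by unfold_locales blast+
  obtain W V where W: "req E (x @ winv y) W" and V: "req E (sigma E M x @ winv (sigma E M y)) V"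
    and red: "reduced E W" and exp: "expands W V"
    by (rule quotient_reduced_expansion)
  have "reduced E V" using reduced_expands[OF exp red] .
  then show ?thesis
    unfolding inZ_req[OF W] inZ_req[OF V] inZZ_req[OF W] inZZ_req[OF V]
      inZ_reduced_iff[OF red] inZ_reduced_iff[OF \<open>reduced E V\<close>]
      inZZ_reduced_iff[OF red] inZZ_reduced_iff[OF \<open>reduced E V\<close>]
      set_expands[OF exp] set_pull_rest_expands[OF exp]
    by simp
qed

end
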